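(* Let $\Bbbk$ be an algebraically closed field of characteristic zero, $G$ a finite group, $\chi:G\to\Bbbk^\times$ a linear character, $g\in Z(G)$, $n\geq2$ the multiplicative order of $\chi(g)$, and $H$ the $\Bbbk$-algebra generated by $\Bbbk G$ and $z$ with relations $z^n=0$, $zs=\chi(s)sz$ ($s\in G$). Suppose $$\Big(\sum_{j=1}^t z^{l_j}\sum_{i=0}^{p-1}\alpha_i^{(j)}e_i\Big)=\Big(\sum_{s=1}^r z^{m_s}\sum_{i=0}^{p-1}\beta_i^{(s)}e_i\Big),$$ where $n-1\geq l_1>\cdots>l_t\geq0$, $n-1\geq m_1>\cdots>m_r\geq0$, all $\alpha_i^{(j)},\beta_i^{(s)}\in\{0,1\}$, $\sum_i\alpha_i^{(t)}\neq0$ and $\sum_i\beta_i^{(r)}\neq0$. Then $l_t=m_r$ and $\alpha_i^{(t)}=\beta_i^{(r)}$ for $0\leq i\leq p-1$.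
   Context: $\chi_0,\dots,\chi_{p-1}$ are the irreducible characters of $G$ and $e_i=\frac{\chi_i(1)}{|G|}\sum_{h\in G}\chi_i(h)h^{-1}$ the primitive central idempotents of $\Bbbk G$. $(a)$ denotes the two-sided ideal of $H$ generated by $a$. *)

theory Defs
  imports "HOL-Algebra.Group" "HOL-Computational_Algebra.Polynomial"
begin

definition alg_closed :: "'k::field itself \<Rightarrow> bool" where
  "alg_closed _ \<longleftrightarrow> (\<forall>q::'k poly. degree q > 0 \<longrightarrow> (\<exists>x. poly q x = 0))"

definition linear_char :: "('g, 'b) monoid_scheme \<Rightarrow> ('g \<Rightarrow> 'k::field) \<Rightarrow> bool" where
  "linear_char G chi \<longleftrightarrow> (\<forall>s\<in>carrier G. chi s \<noteq> 0) \<and>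
     (\<forall>s\<in>carrier G. \<forall>t\<in>carrier G. chi (s \<otimes>\<^bsub>G\<^esub> t) = chi s * chi t)"

definition mult_order_is :: "'k::field \<Rightarrow> nat \<Rightarrow> bool" where
  "mult_order_is x n \<longleftrightarrow> 0 < n \<and> x ^ n = 1 \<and> (\<forall>m. 0 < m \<and> m < n \<longrightarrow> x ^ m \<noteq> 1)"

definition gcarrier :: "('g, 'b) monoid_scheme \<Rightarrow> ('g \<Rightarrow> 'k::field) set" where
  "gcarrier G = {x. \<forall>s. s \<notin> carrier G \<longrightarrow> x s = 0}"

definition gmul :: "('g, 'b) monoid_scheme \<Rightarrow> ('g \<Rightarrow> 'k::field) \<Rightarrow> ('g \<Rightarrow> 'k) \<Rightarrow> ('g \<Rightarrow> 'k)" where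
  "gmul G x y = (\<lambda>u. if u \<in> carrier G
      then (\<Sum>s\<in>carrier G. x s * y (inv\<^bsub>G\<^esub> s \<otimes>\<^bsub>G\<^esub> u)) else 0)"

definition gadd :: "('g \<Rightarrow> 'k::field) \<Rightarrow> ('g \<Rightarrow> 'k) \<Rightarrow> ('g \<Rightarrow> 'k)" where
  "gadd x y = (\<lambda>u. x u + y u)"

definition central_idem :: "('g, 'b) monoid_scheme \<Rightarrow> ('g \<Rightarrow> 'k::field) \<Rightarrow> bool" where
  "central_idem G e \<longleftrightarrow> e \<in> gcarrier G \<and> gmul G e e = e \<and>
     (\<forall>x\<in>gcarrier G. gmul G e x = gmul G x e)"

definition prim_central_idem :: "('g, 'b) monoid_scheme \<Rightarrow> ('g \<Rightarrow> 'k::field) \<Rightarrow> bool" where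
  "prim_central_idem G e \<longleftrightarrow> central_idem G e \<and> e \<noteq> (\<lambda>_. 0) \<and>
     \<not> (\<exists>f f'. central_idem G f \<and> central_idem G f' \<and> f \<noteq> (\<lambda>_. 0) \<and> f' \<noteq> (\<lambda>_. 0) \<and>
          gmul G f f' = (\<lambda>_. 0) \<and> e = gadd f f')"

(* ---------- the algebra H = k<kG, z | z^n = 0, z s = chi(s) s z>, realised on its
   normal-form basis { z^k s : 0 <= k < n, s in G };  a k s = coefficient of z^k s ---------- *)
definition hcarrier :: "('g, 'b) monoid_scheme \<Rightarrow> nat \<Rightarrow> (nat \<Rightarrow> 'g \<Rightarrow> 'k::field) set" where
  "hcarrier G n = {a. \<forall>k s. (n \<le> k \<or> s \<notin> carrier G) \<longrightarrow> a k s = 0}"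

definition hadd :: "(nat \<Rightarrow> 'g \<Rightarrow> 'k::field) \<Rightarrow> (nat \<Rightarrow> 'g \<Rightarrow> 'k) \<Rightarrow> (nat \<Rightarrow> 'g \<Rightarrow> 'k)" where
  "hadd a b = (\<lambda>k s. a k s + b k s)"

(* (z^k s)(z^l t) = chi(s)^(-l) z^(k+l) (s t), and z^m = 0 for m >= n *)
definition hmul :: "('g, 'b) monoid_scheme \<Rightarrow> ('g \<Rightarrow> 'k::field) \<Rightarrow> nat \<Rightarrow>
    (nat \<Rightarrow> 'g \<Rightarrow> 'k) \<Rightarrow> (nat \<Rightarrow> 'g \<Rightarrow> 'k) \<Rightarrow> (nat \<Rightarrow> 'g \<Rightarrow> 'k)" where
  "hmul G chi n a b = (\<lambda>c u. if c < n \<and> u \<in> carrier G then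
      (\<Sum>k\<in>{..c}. \<Sum>s\<in>carrier G.
          a k s * b (c - k) (inv\<^bsub>G\<^esub> s \<otimes>\<^bsub>G\<^esub> u) * inverse (chi s) ^ (c - k))
      else 0)"

definition hG :: "('g, 'b) monoid_scheme \<Rightarrow> ('g \<Rightarrow> 'k::field) \<Rightarrow> (nat \<Rightarrow> 'g \<Rightarrow> 'k)" where
  "hG G x = (\<lambda>k s. if k = 0 \<and> s \<in> carrier G then x s else 0)"

definition hz :: "('g, 'b) monoid_scheme \<Rightarrow> nat \<Rightarrow> nat \<Rightarrow> (nat \<Rightarrow> 'g \<Rightarrow> 'k::field)" where
  "hz G n l = (\<lambda>k s. if k = l \<and> l < n \<and> s = \<one>\<^bsub>G\<^esub> then 1 else 0)"

definition is_hideal :: "('g, 'b) monoid_scheme \<Rightarrow> ('g \<Rightarrow> 'k::field) \<Rightarrow> nat \<Rightarrow>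
    (nat \<Rightarrow> 'g \<Rightarrow> 'k) set \<Rightarrow> bool" where
  "is_hideal G chi n I \<longleftrightarrow> I \<subseteq> hcarrier G n \<and> (\<lambda>_ _. 0) \<in> I \<and>
     (\<forall>a\<in>I. \<forall>b\<in>I. hadd a b \<in> I) \<and>
     (\<forall>a\<in>I. \<forall>x\<in>hcarrier G n. hmul G chi n x a \<in> I \<and> hmul G chi n a x \<in> I)"

definition hideal_gen :: "('g, 'b) monoid_scheme \<Rightarrow> ('g \<Rightarrow> 'k::field) \<Rightarrow> nat \<Rightarrow>
    (nat \<Rightarrow> 'g \<Rightarrow> 'k) \<Rightarrow> (nat \<Rightarrow> 'g \<Rightarrow> 'k) set" where
  "hideal_gen G chi n a = \<Inter>{I. is_hideal G chi n I \<and> a \<in> I}"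

definition zsum :: "('g, 'b) monoid_scheme \<Rightarrow> ('g \<Rightarrow> 'k::field) \<Rightarrow> nat \<Rightarrow> nat \<Rightarrow>
    (nat \<Rightarrow> 'g \<Rightarrow> 'k) \<Rightarrow> nat \<Rightarrow> (nat \<Rightarrow> nat) \<Rightarrow> (nat \<Rightarrow> nat \<Rightarrow> 'k) \<Rightarrow> (nat \<Rightarrow> 'g \<Rightarrow> 'k)" where
  "zsum G chi n p e t l \<alpha> = (\<lambda>k s. \<Sum>j\<in>{1..t}.
      hmul G chi n (hz G n (l j)) (hG G (\<lambda>u. \<Sum>i<p. \<alpha> j i * e i u)) k s)"

end

theory Submission
  imports Defs
begin

(*
  For d < n and a central element E of kG, the elements x of H with x_k = 0 for k < d and
  x_d E = x_d (x_k being the kG-coefficient of z^k) form a two-sided ideal S(d, E), called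
  lead_ideal below: multiplying from the left only twists the degree-0 coefficient of the
  other factor by powers of chi, which keeps it in kG, and from the right E commutes past it.
  Since the alpha^(t)_i are 0 or 1, E_alpha = sum_i alpha^(t)_i e_i is a central idempotent, so
  the left generator lies in S(l_t, E_alpha); hence so does the ideal it generates, in particular
  the right generator. Symmetrically the left generator lies in S(m_r, E_beta). The leading
  coefficients being nonzero forces l_t = m_r, and then E_alpha = E_alpha E_beta = E_beta E_alpha
  = E_beta; multiplying by e_i recovers the coefficients, distinct primitive central idempotents
  being orthogonal.
*)

lemma sum_eq_single_nonzero:
  assumes "finite A" "a \<in> A" "\<And>k. k \<in> A \<Longrightarrow> k \<noteq> a \<Longrightarrow> f k = 0"
  shows "sum f A = f a"
proof -
  have "sum f A = f a + sum f (A - {a})" using assms by (simp add: sum.remove)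
  also have "sum f (A - {a}) = 0" using assms by (intro sum.neutral) auto
  finally show ?thesis by simp
qed

lemma (in group) gmul_assoc: "gmul G (gmul G x y) z = gmul G x (gmul G y z)"
proof (rule ext)
  fix u show "gmul G (gmul G x y) z u = gmul G x (gmul G y z) u"
  proof (cases "u \<in> carrier G")
    case u: True
    have "gmul G (gmul G x y) z u = (\<Sum>w\<in>carrier G. (\<Sum>s\<in>carrier G. x s * y (inv s \<otimes> w)) * z (inv w \<otimes> u))"
      using u by (auto simp: gmul_def intro!: sum.cong)
    also have "\<dots> = (\<Sum>s\<in>carrier G. \<Sum>w\<in>carrier G. x s * y (inv s \<otimes> w) * z (inv w \<otimes> u))"
      unfolding sum_distrib_right by (rule sum.swap)
    also have "\<dots> = (\<Sum>s\<in>carrier G. \<Sum>t\<in>carrier G. x s * y t * z (inv t \<otimes> (inv s \<otimes> u)))"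
    proof (rule sum.cong[OF refl])
      fix s assume s: "s \<in> carrier G"
      show "(\<Sum>w\<in>carrier G. x s * y (inv s \<otimes> w) * z (inv w \<otimes> u))
          = (\<Sum>t\<in>carrier G. x s * y t * z (inv t \<otimes> (inv s \<otimes> u)))"
      proof (rule sum.reindex_bij_witness[where i="\<lambda>t. s \<otimes> t" and j="\<lambda>w. inv s \<otimes> w"])
        fix w assume w: "w \<in> carrier G"
        have "s \<otimes> (inv s \<otimes> u) = u" using s u by (simp add: m_assoc[symmetric])
        then have "inv (inv s \<otimes> w) \<otimes> (inv s \<otimes> u) = inv w \<otimes> u"
          using s w u by (simp add: inv_mult_group m_assoc)
        then show "x s * y (inv s \<otimes> w) * z (inv (inv s \<otimes> w) \<otimes> (inv s \<otimes> u))
            = x s * y (inv s \<otimes> w) * z (inv w \<otimes> u)"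
          by simp
      qed (use s in \<open>simp_all add: m_assoc[symmetric]\<close>)
    qed
    also have "\<dots> = gmul G x (gmul G y z) u"
      using u by (simp add: gmul_def sum_distrib_left mult.assoc)
    finally show ?thesis .
  qed (simp add: gmul_def)
qed

lemma gmul_in_gcarrier: "gmul G x y \<in> gcarrier G"
  by (simp add: gmul_def gcarrier_def)

lemma gmul_zero_left: "gmul G (\<lambda>_. 0) y = (\<lambda>_. 0)"
  unfolding gmul_def by (simp only: mult_zero_left sum.neutral_const if_cancel)

lemma gmul_add_left: "gmul G (\<lambda>u. x u + y u) z = (\<lambda>u. gmul G x z u + gmul G y z u)"
  by (auto simp: gmul_def algebra_simps sum.distrib)

lemma gmul_diff_left: "gmul G (\<lambda>u. x u - y u) z = (\<lambda>u. gmul G x z u - gmul G y z u)"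
  by (auto simp: gmul_def algebra_simps sum_subtractf)

lemma gmul_diff_right: "gmul G x (\<lambda>u. y u - z u) = (\<lambda>u. gmul G x y u - gmul G x z u)"
  by (auto simp: gmul_def algebra_simps sum_subtractf)

lemma gmul_sum_left:
  "gmul G (\<lambda>u. \<Sum>i\<in>I. c i * f i u) y = (\<lambda>u. \<Sum>i\<in>I. c i * gmul G (f i) y u)"
proof (rule ext)
  fix u
  have "(\<Sum>s\<in>carrier G. (\<Sum>i\<in>I. c i * f i s) * y (inv\<^bsub>G\<^esub> s \<otimes>\<^bsub>G\<^esub> u))
      = (\<Sum>i\<in>I. c i * (\<Sum>s\<in>carrier G. f i s * y (inv\<^bsub>G\<^esub> s \<otimes>\<^bsub>G\<^esub> u)))"
    by (simp add: sum_distrib_left sum_distrib_right mult.assoc sum.swap[of _ "carrier G"])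
  then show "gmul G (\<lambda>u. \<Sum>i\<in>I. c i * f i u) y u = (\<Sum>i\<in>I. c i * gmul G (f i) y u)"
    by (simp add: gmul_def)
qed

lemma gmul_sum_right:
  "gmul G x (\<lambda>u. \<Sum>i\<in>I. c i * f i u) = (\<lambda>u. \<Sum>i\<in>I. c i * gmul G x (f i) u)"
proof (rule ext)
  fix u
  have "(\<Sum>s\<in>carrier G. x s * (\<Sum>i\<in>I. c i * f i (inv\<^bsub>G\<^esub> s \<otimes>\<^bsub>G\<^esub> u)))
      = (\<Sum>i\<in>I. c i * (\<Sum>s\<in>carrier G. x s * f i (inv\<^bsub>G\<^esub> s \<otimes>\<^bsub>G\<^esub> u)))"
    by (simp add: sum_distrib_left mult.left_commute sum.swap[of _ "carrier G"])
  then show "gmul G x (\<lambda>u. \<Sum>i\<in>I. c i * f i u) u = (\<Sum>i\<in>I. c i * gmul G x (f i) u)"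
    by (simp add: gmul_def)
qed

lemma prim_central_idemD:
  assumes "prim_central_idem G e"
  shows "e \<in> gcarrier G" "gmul G e e = e" "\<And>x. x \<in> gcarrier G \<Longrightarrow> gmul G e x = gmul G x e"
    "e \<noteq> (\<lambda>_. 0)"
  using assms unfolding prim_central_idem_def central_idem_def by blast+

lemma (in group) central_idem_gmul:
  fixes e f :: "'a \<Rightarrow> 'k::field"
  assumes e: "central_idem G e" and f: "central_idem G f"
  shows "central_idem G (gmul G e f)"
  unfolding central_idem_def
proof (intro conjI ballI)
  have ee: "gmul G e e = e" and ec: "\<And>x. x \<in> gcarrier G \<Longrightarrow> gmul G e x = gmul G x e"
    using e by (auto simp: central_idem_def)
  have ff: "gmul G f f = f" and fc: "\<And>x. x \<in> gcarrier G \<Longrightarrow> gmul G f x = gmul G x f"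
    using f by (auto simp: central_idem_def)
  have ef: "gmul G e f = gmul G f e" using ec f by (simp add: central_idem_def)
  show "gmul G e f \<in> gcarrier G" by (rule gmul_in_gcarrier)
  have "gmul G (gmul G e f) (gmul G e f) = gmul G e (gmul G (gmul G f e) f)"
    by (simp only: gmul_assoc)
  also have "\<dots> = gmul G (gmul G e e) (gmul G f f)"
    by (simp only: ef[symmetric]) (simp only: gmul_assoc)
  finally show "gmul G (gmul G e f) (gmul G e f) = gmul G e f" by (simp only: ee ff)
  fix x :: "'a \<Rightarrow> 'k" assume x: "x \<in> gcarrier G"
  have "gmul G (gmul G e f) x = gmul G e (gmul G x f)" by (simp only: gmul_assoc fc[OF x])
  also have "\<dots> = gmul G (gmul G x e) f" by (simp only: gmul_assoc[symmetric] ec[OF x])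
  finally show "gmul G (gmul G e f) x = gmul G x (gmul G e f)" by (simp only: gmul_assoc)
qed

lemma (in group) prim_central_idem_absorbs:
  assumes a: "prim_central_idem G a" and h: "central_idem G h" "h \<noteq> (\<lambda>_. 0)"
    and ah: "gmul G a h = h"
  shows "a = h"
proof -
  have aa: "gmul G a a = a" and ac: "\<And>x. x \<in> gcarrier G \<Longrightarrow> gmul G a x = gmul G x a"
    and a_carrier: "a \<in> gcarrier G"
    using prim_central_idemD[OF a] by blast+
  have hh: "gmul G h h = h" and hc: "\<And>x. x \<in> gcarrier G \<Longrightarrow> gmul G h x = gmul G x h"
    and h_carrier: "h \<in> gcarrier G"
    using h by (auto simp: central_idem_def)
  have ha: "gmul G h a = h" using ah hc[OF a_carrier] by simp
  define h' where "h' = (\<lambda>u. a u - h u)"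
  have "central_idem G h'"
    unfolding central_idem_def
  proof (intro conjI ballI)
    show "h' \<in> gcarrier G" using a_carrier h_carrier by (auto simp: h'_def gcarrier_def)
    show "gmul G h' h' = h'"
      unfolding h'_def by (simp only: gmul_diff_left gmul_diff_right aa ah ha hh diff_self diff_zero)
    show "gmul G h' x = gmul G x h'" if "x \<in> gcarrier G" for x
      unfolding h'_def gmul_diff_left gmul_diff_right using ac[OF that] hc[OF that] by simp
  qed
  moreover have "gmul G h h' = (\<lambda>_. 0)" unfolding h'_def gmul_diff_right using ha hh by simp
  moreover have "a = gadd h h'" by (simp add: gadd_def h'_def)
  ultimately have "h' = (\<lambda>_. 0)"
    using a h unfolding prim_central_idem_def by blast
  then show ?thesis by (simp add: h'_def fun_eq_iff)
qed

lemma (in group) prim_central_idem_orthogonal: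
  assumes e: "prim_central_idem G e" and f: "prim_central_idem G f" and "e \<noteq> f"
  shows "gmul G e f = (\<lambda>_. 0)"
proof (rule ccontr)
  let ?h = "gmul G e f"
  assume h_nonzero: "?h \<noteq> (\<lambda>_. 0)"
  have h: "central_idem G ?h"
    using e f by (intro central_idem_gmul) (simp_all add: prim_central_idem_def)
  have "gmul G e ?h = ?h" by (simp only: gmul_assoc[symmetric] prim_central_idemD(2)[OF e])
  then have "e = ?h" by (rule prim_central_idem_absorbs[OF e h h_nonzero])
  have "?h = gmul G f e" using prim_central_idemD(3)[OF e prim_central_idemD(1)[OF f]] .
  then have "gmul G f ?h = ?h" by (simp only: gmul_assoc[symmetric] prim_central_idemD(2)[OF f])
  then have "f = ?h" by (rule prim_central_idem_absorbs[OF f h h_nonzero])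
  with \<open>e = ?h\<close> \<open>e \<noteq> f\<close> show False by simp
qed

definition idem_lincomb :: "nat \<Rightarrow> (nat \<Rightarrow> 'g \<Rightarrow> 'k::field) \<Rightarrow> (nat \<Rightarrow> 'k) \<Rightarrow> 'g \<Rightarrow> 'k" where
  "idem_lincomb p e a = (\<lambda>u. \<Sum>i<p. a i * e i u)"

lemma idem_lincomb_in_gcarrier:
  assumes "\<forall>i<p. e i \<in> gcarrier G"
  shows "idem_lincomb p e a \<in> gcarrier G"
  using assms by (auto simp: idem_lincomb_def gcarrier_def)

lemma (in group) idem_lincomb_central:
  assumes prim: "\<forall>i<p. prim_central_idem G (e i)" and x: "x \<in> gcarrier G"
  shows "gmul G (idem_lincomb p e a) x = gmul G x (idem_lincomb p e a)"
proof -
  have "gmul G (e i) x = gmul G x (e i)" if "i < p" for i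
    using prim that x prim_central_idemD(3) by blast
  then show ?thesis
    unfolding idem_lincomb_def gmul_sum_left gmul_sum_right by simp
qed

lemma (in group) idem_lincomb_gmul_idem:
  assumes prim: "\<forall>i<p. prim_central_idem G (e i)" and inj: "inj_on e {..<p}" and k: "k < p"
  shows "gmul G (idem_lincomb p e a) (e k) = (\<lambda>u. a k * e k u)"
proof (rule ext)
  fix u
  have "a i * gmul G (e i) (e k) u = 0" if "i < p" "i \<noteq> k" for i
  proof -
    have "e i \<noteq> e k" using inj_onD[OF inj] that k by blast
    then have "gmul G (e i) (e k) = (\<lambda>_. 0)"
      using prim_central_idem_orthogonal prim that k by blast
    then show ?thesis by simp
  qed
  then have "(\<Sum>i<p. a i * gmul G (e i) (e k) u) = a k * gmul G (e k) (e k) u"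
    using k by (intro sum_eq_single_nonzero) auto
  moreover have "gmul G (e k) (e k) = e k" using prim_central_idemD(2) prim k by blast
  ultimately show "gmul G (idem_lincomb p e a) (e k) u = a k * e k u"
    by (simp add: idem_lincomb_def gmul_sum_left)
qed

lemma (in group) idem_lincomb_idem:
  assumes prim: "\<forall>i<p. prim_central_idem G (e i)" and inj: "inj_on e {..<p}"
    and a01: "\<forall>i<p. a i \<in> {0, 1}"
  shows "gmul G (idem_lincomb p e a) (idem_lincomb p e a) = idem_lincomb p e a"
proof -
  have coeff: "a i * gmul G (idem_lincomb p e a) (e i) u = a i * e i u" if "i < p" for i u
    using idem_lincomb_gmul_idem[OF prim inj that] a01 that by auto
  have "gmul G (idem_lincomb p e a) (\<lambda>u. \<Sum>i<p. a i * e i u) = (\<lambda>u. \<Sum>i<p. a i * e i u)"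
    unfolding gmul_sum_right by (intro ext sum.cong refl) (simp add: coeff)
  then show ?thesis by (simp only: idem_lincomb_def)
qed

lemma (in group) idem_lincomb_coeff_eq:
  assumes prim: "\<forall>i<p. prim_central_idem G (e i)" and inj: "inj_on e {..<p}"
    and eq: "idem_lincomb p e a = idem_lincomb p e b" and i: "i < p"
  shows "a i = b i"
proof -
  obtain u where u: "e i u \<noteq> 0" using prim_central_idemD(4) prim i by fastforce
  have "a i * e i u = b i * e i u"
    using idem_lincomb_gmul_idem[OF prim inj i] eq by metis
  with u show ?thesis by simp
qed

lemma (in group) idem_lincomb_nonzero:
  assumes prim: "\<forall>i<p. prim_central_idem G (e i)" and inj: "inj_on e {..<p}"
    and a: "(\<Sum>i<p. a i) \<noteq> 0"
  shows "idem_lincomb p e a \<noteq> (\<lambda>_. 0)"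
proof
  assume "idem_lincomb p e a = (\<lambda>_. 0)"
  then have "idem_lincomb p e a = idem_lincomb p e (\<lambda>_. 0)" by (simp add: idem_lincomb_def)
  then have "\<forall>i<p. a i = 0" using idem_lincomb_coeff_eq[OF prim inj] by blast
  with a show False by simp
qed

lemma (in group) hmul_hz_hG:
  assumes fin: "finite (carrier G)" and l: "l < n" and x: "x \<in> gcarrier G"
  shows "hmul G chi n (hz G n l) (hG G x) c = (if c = l then x else (\<lambda>_. 0))"
proof (rule ext)
  fix u
  show "hmul G chi n (hz G n l) (hG G x) c u = (if c = l then x else (\<lambda>_. 0)) u"
  proof (cases "c < n \<and> u \<in> carrier G")
    case cu: True
    have inner: "(\<Sum>s\<in>carrier G. hz G n l k s * hG G x (c - k) (inv s \<otimes> u) * inverse (chi s) ^ (c - k))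
        = (if k = l then hG G x (c - l) u * inverse (chi \<one>) ^ (c - l) else 0)" for k
    proof (cases "k = l")
      case True
      have "(\<Sum>s\<in>carrier G. hz G n l k s * hG G x (c - k) (inv s \<otimes> u) * inverse (chi s) ^ (c - k))
          = hz G n l k \<one> * hG G x (c - k) (inv \<one> \<otimes> u) * inverse (chi \<one>) ^ (c - k)"
        by (rule sum_eq_single_nonzero) (auto simp: hz_def fin)
      then show ?thesis using True l cu by (simp add: hz_def)
    qed (auto simp: hz_def intro!: sum.neutral)
    have "hmul G chi n (hz G n l) (hG G x) c u
        = (\<Sum>k\<in>{..c}. if k = l then hG G x (c - l) u * inverse (chi \<one>) ^ (c - l) else 0)"
      using cu by (simp add: hmul_def inner)
    also have "\<dots> = (if c = l then x u else 0)"
      using cu by (auto simp: hG_def)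
    finally show ?thesis by simp
  qed (use l x in \<open>auto simp: hmul_def gcarrier_def\<close>)
qed

lemma decreasing_on_interval:
  fixes l :: "nat \<Rightarrow> nat"
  assumes dec: "\<forall>j\<in>{1..<t}. l (Suc j) < l j" and "1 \<le> i" "i < j" "j \<le> t"
  shows "l j < l i"
  using assms(3,4)
proof (induction j)
  case (Suc j)
  have "l (Suc j) < l j" using dec Suc.prems assms(2) by auto
  moreover have "i = j \<or> l j < l i" using Suc by (cases "i = j") auto
  ultimately show ?case by auto
qed simp

lemma (in group) zsum_coeff:
  assumes fin: "finite (carrier G)" and e: "\<forall>i<p. e i \<in> gcarrier G"
    and l: "\<forall>j\<in>{1..t}. l j < n"
  shows "zsum G chi n p e t l \<alpha> c = (\<lambda>u. \<Sum>j\<in>{1..t}. if c = l j then idem_lincomb p e (\<alpha> j) u else 0)"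
proof -
  have "hmul G chi n (hz G n (l j)) (hG G (idem_lincomb p e (\<alpha> j))) c u
      = (if c = l j then idem_lincomb p e (\<alpha> j) u else 0)" if "j \<in> {1..t}" for j u
    using hmul_hz_hG[OF fin _ idem_lincomb_in_gcarrier[OF e]] l that by simp
  then show ?thesis by (simp add: zsum_def idem_lincomb_def)
qed

definition lead_ideal :: "('g, 'b) monoid_scheme \<Rightarrow> nat \<Rightarrow> nat \<Rightarrow> ('g \<Rightarrow> 'k::field) \<Rightarrow>
    (nat \<Rightarrow> 'g \<Rightarrow> 'k) set" where
  "lead_ideal G n d E = {x \<in> hcarrier G n. (\<forall>k<d. x k = (\<lambda>_. 0)) \<and> gmul G (x d) E = x d}"

lemma hmul_in_hcarrier: "hmul G chi n x y \<in> hcarrier G n"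
  unfolding hmul_def hcarrier_def by auto

lemma hmul_eq_zero_below_right:
  assumes "\<forall>k<d. y k = (\<lambda>_. 0)" "c < d"
  shows "hmul G chi n x y c = (\<lambda>_. 0)"
  using assms by (auto simp: hmul_def)

lemma hmul_eq_zero_below_left:
  assumes "\<forall>k<d. y k = (\<lambda>_. 0)" "c < d"
  shows "hmul G chi n y x c = (\<lambda>_. 0)"
  using assms by (auto simp: hmul_def)

lemma hmul_lead_coeff_right:
  assumes y: "\<forall>k<d. y k = (\<lambda>_. 0)" and d: "d < n"
  shows "hmul G chi n x y d = gmul G (\<lambda>s. x 0 s * inverse (chi s) ^ d) (y d)"
proof (rule ext)
  fix u
  have "(\<Sum>k\<in>{..d}. \<Sum>s\<in>carrier G. x k s * y (d - k) (inv\<^bsub>G\<^esub> s \<otimes>\<^bsub>G\<^esub> u) * inverse (chi s) ^ (d - k))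
      = (\<Sum>s\<in>carrier G. x 0 s * y d (inv\<^bsub>G\<^esub> s \<otimes>\<^bsub>G\<^esub> u) * inverse (chi s) ^ d)"
    by (subst sum_eq_single_nonzero[where a = 0]) (use y in auto)
  then show "hmul G chi n x y d u = gmul G (\<lambda>s. x 0 s * inverse (chi s) ^ d) (y d) u"
    using d by (simp add: hmul_def gmul_def mult_ac)
qed

lemma hmul_lead_coeff_left:
  assumes y: "\<forall>k<d. y k = (\<lambda>_. 0)" and d: "d < n"
  shows "hmul G chi n y x d = gmul G (y d) (x 0)"
proof (rule ext)
  fix u
  have "(\<Sum>k\<in>{..d}. \<Sum>s\<in>carrier G. y k s * x (d - k) (inv\<^bsub>G\<^esub> s \<otimes>\<^bsub>G\<^esub> u) * inverse (chi s) ^ (d - k))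
      = (\<Sum>s\<in>carrier G. y d s * x 0 (inv\<^bsub>G\<^esub> s \<otimes>\<^bsub>G\<^esub> u))"
    by (subst sum_eq_single_nonzero[where a = d]) (use y in auto)
  then show "hmul G chi n y x d u = gmul G (y d) (x 0) u"
    using d by (simp add: hmul_def gmul_def)
qed

lemma (in group) lead_ideal_is_hideal:
  fixes E :: "'a \<Rightarrow> 'k::field"
  assumes d: "d < n" and E: "E \<in> gcarrier G" and E_central: "\<forall>x\<in>gcarrier G. gmul G E x = gmul G x E"
  shows "is_hideal G chi n (lead_ideal G n d E)"
  unfolding is_hideal_def
proof (intro conjI ballI)
  show "lead_ideal G n d E \<subseteq> hcarrier G n" by (auto simp: lead_ideal_def)
  show "(\<lambda>_ _. 0) \<in> lead_ideal G n d E"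
    by (simp add: lead_ideal_def hcarrier_def gmul_zero_left)
next
  fix a b :: "nat \<Rightarrow> 'a \<Rightarrow> 'k" assume "a \<in> lead_ideal G n d E" "b \<in> lead_ideal G n d E"
  then show "hadd a b \<in> lead_ideal G n d E"
    by (auto simp: lead_ideal_def hcarrier_def hadd_def gmul_add_left fun_eq_iff)
next
  fix a x :: "nat \<Rightarrow> 'a \<Rightarrow> 'k" assume a: "a \<in> lead_ideal G n d E" and x: "x \<in> hcarrier G n"
  have a_low: "\<forall>k<d. a k = (\<lambda>_. 0)" and a_lead: "gmul G (a d) E = a d"
    using a by (auto simp: lead_ideal_def)
  have x0: "x 0 \<in> gcarrier G" using x by (auto simp: hcarrier_def gcarrier_def)
  let ?x' = "\<lambda>s. x 0 s * inverse (chi s) ^ d"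
  have "gmul G (hmul G chi n x a d) E = gmul G ?x' (gmul G (a d) E)"
    by (simp only: hmul_lead_coeff_right[OF a_low d] gmul_assoc)
  also have "\<dots> = hmul G chi n x a d" by (simp only: a_lead hmul_lead_coeff_right[OF a_low d])
  finally show "hmul G chi n x a \<in> lead_ideal G n d E"
    using hmul_eq_zero_below_right[OF a_low] hmul_in_hcarrier by (auto simp: lead_ideal_def)
  have "gmul G (hmul G chi n a x d) E = gmul G (a d) (gmul G (x 0) E)"
    by (simp only: hmul_lead_coeff_left[OF a_low d] gmul_assoc)
  also have "\<dots> = gmul G (gmul G (a d) E) (x 0)" using E_central x0 by (simp add: gmul_assoc)
  also have "\<dots> = hmul G chi n a x d" by (simp only: a_lead hmul_lead_coeff_left[OF a_low d])
  finally show "hmul G chi n a x \<in> lead_ideal G n d E"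
    using hmul_eq_zero_below_left[OF a_low] hmul_in_hcarrier by (auto simp: lead_ideal_def)
qed

lemma (in group) zsum_lead_ideal:
  assumes fin: "finite (carrier G)"
    and prim: "\<forall>i<p. prim_central_idem G (e i)" and inj: "inj_on e {..<p}"
    and t: "1 \<le> t" and l1: "l 1 < n" and dec: "\<forall>j\<in>{1..<t}. l (Suc j) < l j"
    and \<alpha>01: "\<forall>i<p. \<alpha> t i \<in> {0, 1}"
  shows "l t < n"
    and "zsum G chi n p e t l \<alpha> \<in> lead_ideal G n (l t) (idem_lincomb p e (\<alpha> t))"
    and "zsum G chi n p e t l \<alpha> (l t) = idem_lincomb p e (\<alpha> t)"
proof -
  have e: "\<forall>i<p. e i \<in> gcarrier G" using prim prim_central_idemD(1) by blast
  have l_bounds: "l j < n" "j \<noteq> t \<Longrightarrow> l t < l j" if "j \<in> {1..t}" for j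
  proof -
    show "l j < n" using decreasing_on_interval[OF dec, of 1 j] l1 that by (cases "j = 1") auto
    show "j \<noteq> t \<Longrightarrow> l t < l j" using decreasing_on_interval[OF dec, of j t] that by auto
  qed
  note coeff = zsum_coeff[OF fin e, of t l, where \<alpha> = \<alpha> and chi = chi]
  show "l t < n" using l_bounds t by simp
  have lead: "zsum G chi n p e t l \<alpha> (l t) = idem_lincomb p e (\<alpha> t)"
  proof (rule ext)
    fix u
    have "(\<Sum>j\<in>{1..t}. if l t = l j then idem_lincomb p e (\<alpha> j) u else 0) = idem_lincomb p e (\<alpha> t) u"
      by (subst sum_eq_single_nonzero[where a = t]) (use t l_bounds in fastforce)+
    then show "zsum G chi n p e t l \<alpha> (l t) u = idem_lincomb p e (\<alpha> t) u"
      using coeff l_bounds by simp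
  qed
  then show "zsum G chi n p e t l \<alpha> (l t) = idem_lincomb p e (\<alpha> t)" .
  have "zsum G chi n p e t l \<alpha> \<in> hcarrier G n"
    using idem_lincomb_in_gcarrier[OF e] coeff l_bounds
    by (fastforce simp: hcarrier_def gcarrier_def intro!: sum.neutral)
  moreover have "\<forall>c<l t. zsum G chi n p e t l \<alpha> c = (\<lambda>_. 0)"
    using coeff l_bounds by (fastforce intro!: sum.neutral)
  ultimately show "zsum G chi n p e t l \<alpha> \<in> lead_ideal G n (l t) (idem_lincomb p e (\<alpha> t))"
    using lead idem_lincomb_idem[OF prim inj \<alpha>01] by (simp add: lead_ideal_def)
qed

lemma hideal_gen_eq_mem:
  assumes "hideal_gen G chi n a = hideal_gen G chi n b" and "is_hideal G chi n I" and "a \<in> I"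
  shows "b \<in> I"
  using assms unfolding hideal_gen_def by blast

lemma (in group) lead_ideal_lead_coeff_unique:
  assumes x: "x \<in> lead_ideal G n d' F" and y: "y \<in> lead_ideal G n d E"
    and x_lead: "x d = E" and y_lead: "y d' = F"
    and E: "E \<noteq> (\<lambda>_. 0)" "\<forall>z\<in>gcarrier G. gmul G E z = gmul G z E"
    and F: "F \<noteq> (\<lambda>_. 0)" "F \<in> gcarrier G"
  shows "d = d' \<and> E = F"
proof -
  have "\<not> d < d'" using x x_lead E(1) by (auto simp: lead_ideal_def)
  moreover have "\<not> d' < d" using y y_lead F(1) by (auto simp: lead_ideal_def)
  ultimately have dd': "d = d'" by simp
  have "E = gmul G E F" using x x_lead dd' by (simp add: lead_ideal_def)
  also have "\<dots> = gmul G F E" using E(2) F(2) by blast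
  also have "\<dots> = F" using y y_lead dd' by (simp add: lead_ideal_def)
  finally show ?thesis using dd' by simp
qed

theorem corollary3p6:
  fixes G :: "('g, 'b) monoid_scheme" and chi :: "'g \<Rightarrow> 'k::field_char_0"
    and g :: 'g and n p t r :: nat
    and e :: "nat \<Rightarrow> 'g \<Rightarrow> 'k"
    and l m :: "nat \<Rightarrow> nat" and \<alpha> \<beta> :: "nat \<Rightarrow> nat \<Rightarrow> 'k"
  assumes "alg_closed TYPE('k)"
    and "group G" and "finite (carrier G)"
    and "linear_char G chi"
    and "g \<in> carrier G" and "\<forall>s\<in>carrier G. g \<otimes>\<^bsub>G\<^esub> s = s \<otimes>\<^bsub>G\<^esub> g"
    and "n \<ge> 2" and "mult_order_is (chi g) n"
    and "bij_betw e {..<p} {x. prim_central_idem G x}"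
    and "1 \<le> t" and "l 1 \<le> n - 1" and "\<forall>j\<in>{1..<t}. l j > l (Suc j)"
    and "1 \<le> r" and "m 1 \<le> n - 1" and "\<forall>j\<in>{1..<r}. m j > m (Suc j)"
    and "\<forall>j\<in>{1..t}. \<forall>i<p. \<alpha> j i \<in> {0, 1}"
    and "\<forall>s\<in>{1..r}. \<forall>i<p. \<beta> s i \<in> {0, 1}"
    and "(\<Sum>i<p. \<alpha> t i) \<noteq> 0" and "(\<Sum>i<p. \<beta> r i) \<noteq> 0"
    and "hideal_gen G chi n (zsum G chi n p e t l \<alpha>) = hideal_gen G chi n (zsum G chi n p e r m \<beta>)"
  shows "l t = m r \<and> (\<forall>i<p. \<alpha> t i = \<beta> r i)"
proof -
  interpret group G by (rule assms(2))
  have prim: "\<forall>i<p. prim_central_idem G (e i)" and inj: "inj_on e {..<p}"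
    using assms(9) by (auto simp: bij_betw_def)
  have "l 1 < n" "m 1 < n" using assms(7,11,14) by simp_all
  have \<alpha>01: "\<forall>i<p. \<alpha> t i \<in> {0, 1}" and \<beta>01: "\<forall>i<p. \<beta> r i \<in> {0, 1}" using assms(10,13,16,17) by auto
  note a = zsum_lead_ideal[where \<alpha> = \<alpha>,
      OF assms(3) prim inj assms(10) \<open>l 1 < n\<close> assms(12) \<alpha>01]
  note b = zsum_lead_ideal[where \<alpha> = \<beta>,
      OF assms(3) prim inj assms(13) \<open>m 1 < n\<close> assms(15) \<beta>01]
  let ?E = "idem_lincomb p e (\<alpha> t)" and ?F = "idem_lincomb p e (\<beta> r)"
  have e: "\<forall>i<p. e i \<in> gcarrier G" using prim prim_central_idemD(1) by blast
  have b_in_a: "zsum G chi n p e r m \<beta> \<in> lead_ideal G n (l t) ?E"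
    using hideal_gen_eq_mem[OF assms(20) lead_ideal_is_hideal a(2)]
      a(1) idem_lincomb_in_gcarrier[OF e] idem_lincomb_central[OF prim] by blast
  have a_in_b: "zsum G chi n p e t l \<alpha> \<in> lead_ideal G n (m r) ?F"
    using hideal_gen_eq_mem[OF assms(20)[symmetric] lead_ideal_is_hideal b(2)]
      b(1) idem_lincomb_in_gcarrier[OF e] idem_lincomb_central[OF prim] by blast
  have "l t = m r \<and> ?E = ?F"
    using lead_ideal_lead_coeff_unique[OF a_in_b b_in_a a(3) b(3)]
      idem_lincomb_nonzero[OF prim inj] assms(18,19)
      idem_lincomb_central[OF prim] idem_lincomb_in_gcarrier[OF e] by blast
  then show ?thesis using idem_lincomb_coeff_eq[OF prim inj] by blast
qed

end
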